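(* Let $N=3$, $p$ a prime, and let $h_T$, $\omega_j(T)$ be as in the context. Assume the orthogonality estimate (E) and Weyl law stated in the context, with exponent $\theta$ (known: $\theta\le 7/64$). Let $i_1,i'_1,i_2,i'_2$ be non-negative integers and define $f:T/W\to\mathbb{C}$ by $$f(\mathrm{diag}(\alpha_1,\alpha_2,\alpha_3))=\Big(\sum_{i}\alpha_i\Big)^{i_1}\Big(\sum_i\overline{\alpha_i}\Big)^{i'_1}\Big(\sum_{i<k}\alpha_i\alpha_k\Big)^{i_2}\Big(\sum_{i<k}\overline{\alpha_i\alpha_k}\Big)^{i'_2}.$$ Put $P=p^{i_1+i'_1+i_2+i'_2}$. Then for every fixed $\epsilon>0$, as $T\to\infty$, $$\frac{\sum_{j=1}^\infty f(X_j(p))\,\omega_j(T)}{\sum_{j=1}^\infty\omega_j(T)}=\int_{T_0/W}f(x)\,dx+O\Big((T^2P^{1/2}+T^3P^{\theta}+P^{5/3})\,T^{-5+\epsilon}P^{\epsilon}\Big),$$ where the implied constant may depend on $\epsilon$ and on $i_1,i'_1,i_2,i'_2$.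
   Context: Let $\phi_1,\phi_2,\dots$ be a basis of Hecke–Maass cusp forms for $\mathrm{SL}(3,\mathbb{Z})$ with Fourier coefficients $A_j(m_1,m_2)$ normalized by $A_j(1,1)=1$ and spectral parameters $\nu^{(j)}=(\nu^{(j)}_1,\nu^{(j)}_2)$. $L(1,\phi_j,\mathrm{Ad})$ is the residue at $s=1$ of $L(s,\phi_j\times\tilde\phi_j)=\zeta(3s)\sum_{m_1,m_2\ge1}|A_j(m_1,m_2)|^2m_1^{-2s}m_2^{-s}$. $T$ is the diagonal torus of $\mathrm{SL}(3,\mathbb{C})$, $T_0$ the diagonal matrices with unimodular entries, $W\cong S_3$ acting by permutation; $dx$ is the Sato–Tate measure on $T_0/W$ (pushforward of normalized Haar measure of $\mathrm{SU}(3)$). $X_j(p)=\mathrm{diag}(\alpha_{p,1},\alpha_{p,2},\alpha_{p,3})\in T/W$ is the Satake parameter at $p$ of the unramified local component at $p$ of the automorphic representation of $\mathrm{PGL}(3,\mathbb{A})$ attached to $\phi_j$. Test functions: for $T\gg1$, $h_T$ is non-negative, uniformly bounded on $\{|\operatorname{Re}\nu_1|\le1/2\}\times\{|\operatorname{Re}\nu_2|\le1/2\}$, $h_T\asymp1$ on $\{c\le\operatorname{Im}\nu_1,\operatorname{Im}\nu_2\le T,\ |\operatorname{Re}\nu_1|,|\operatorname{Re}\nu_2|\le1/2\}$ for an absolute constant $c>0$, and $h_T(\nu_1,\nu_2)\ll_A((1+|\nu_1|/T)(1+|\nu_2|/T))^{-A}$ for all $A$. Weights $\omega_j(T)=h_T(\nu^{(j)})/L(1,\phi_j,\mathrm{Ad})$.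 (E) (Goldfeld–Kontorovich, Blomer): for every $\epsilon>0$ and positive integers $m_1,m_2,n_1,n_2$ with $Q=m_1m_2n_1n_2$, $\sum_jA_j(m_1,m_2)\overline{A_j(n_1,n_2)}\omega_j(T)=\delta_{m_1,n_1}\delta_{m_2,n_2}\sum_j\omega_j(T)+O_\epsilon\big((T^2Q^{1/2}+T^3Q^{\theta}+Q^{5/3})(TQ)^\epsilon\big)$, and $\sum_j\omega_j(T)\asymp T^5$. *)

theory Defs
  imports "HOL-Analysis.Analysis"
begin

text \<open>A point of T/W (diagonal torus modulo permutations) is represented by an
  ordered triple of diagonal entries; all functions below are symmetric.\<close>

definition hcomp :: "nat \<Rightarrow> complex \<times> complex \<times> complex \<Rightarrow> complex" where
  "hcomp k a = (case a of (a1, a2, a3) \<Rightarrow>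
     (\<Sum>i\<le>k. \<Sum>j\<le>k - i. a1 ^ i * a2 ^ j * a3 ^ (k - i - j)))"

text \<open>Schur polynomial s_(l1,l2,0) in three variables (l1 \<ge> l2), via Jacobi--Trudi.\<close>
definition schur2 :: "nat \<Rightarrow> nat \<Rightarrow> complex \<times> complex \<times> complex \<Rightarrow> complex" where
  "schur2 l1 l2 a = hcomp l1 a * hcomp l2 a
     - (if l2 = 0 then 0 else hcomp (l1 + 1) a * hcomp (l2 - 1) a)"

definition ffun :: "nat \<Rightarrow> nat \<Rightarrow> nat \<Rightarrow> nat \<Rightarrow> complex \<times> complex \<times> complex \<Rightarrow> complex" where
  "ffun i1 i1' i2 i2' a = (case a of (a1, a2, a3) \<Rightarrow>
      (a1 + a2 + a3) ^ i1 * (cnj a1 + cnj a2 + cnj a3) ^ i1'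
    * (a1 * a2 + a1 * a3 + a2 * a3) ^ i2
    * (cnj (a1 * a2) + cnj (a1 * a3) + cnj (a2 * a3)) ^ i2')"

text \<open>Integral against the Sato--Tate measure on T_0/W (pushforward of normalized
  Haar measure of SU(3)), written via the Weyl integration formula:
  (1/|W|) times the integral over the maximal torus with normalized Haar measure
  of F times |Vandermonde|^2.\<close>
definition sato_tate_integral :: "(complex \<times> complex \<times> complex \<Rightarrow> complex) \<Rightarrow> complex" where
  "sato_tate_integral F =
     of_real (1 / (6 * (2 * pi) ^ 2)) *
     (LBINT t1=0..2*pi. (LBINT t2=0..2*pi.
        F (cis t1, cis t2, cis (-(t1 + t2))) *
        of_real ((cmod ((cis t1 - cis t2) * (cis t1 - cis (-(t1 + t2)))
                         * (cis t2 - cis (-(t1 + t2))))) ^ 2)))"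

end

(*
  Write e1 = a1 + a2 + a3 and e2 = a1 a2 + a1 a3 + a2 a3, so that
  f = e1^i1 e2^i2 * conj (e1^i1' e2^i2').  On the torus a1 a2 a3 = 1 the Pieri rules for
  e1 and e2 expand e1^i e2^k into Schur polynomials s_(a,b) with a <= i + k, so f is a finite
  combination of products s_lambda * conj s_mu.  By the Casselman-Shalika formula
  s_(a,b)(X_j(p)) = A_j(p^(a-b), p^b), so (E) gives the weighted average of each product as
  delta(lambda, mu) up to the stated error, with Q <= P.  On the other side, the Weyl character
  formula (Vandermonde * s_(a,b) = alternant of (a+2, b+1, 0)) turns the Sato-Tate integral of
  s_lambda * conj s_mu into a constant term of a trigonometric polynomial on the torus, which is
  delta(lambda, mu).  The Weyl law converts the absolute error of (E) into the relative error
  T^(-5).  Only (E), the Weyl law, the Casselman-Shalika formula and det X_j(p) = 1 are used;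
  the hypotheses on h and L merely describe the weights.
*)
theory Submission
  imports Defs
begin

section \<open>Complete homogeneous and Schur polynomials in three variables\<close>

type_synonym triple = "complex \<times> complex \<times> complex"

definition e1 :: "triple \<Rightarrow> complex" where
  "e1 t = (case t of (x, y, z) \<Rightarrow> x + y + z)"

definition e2 :: "triple \<Rightarrow> complex" where
  "e2 t = (case t of (x, y, z) \<Rightarrow> x * y + x * z + y * z)"

definition e3 :: "triple \<Rightarrow> complex" where
  "e3 t = (case t of (x, y, z) \<Rightarrow> x * y * z)"

definition hcomp_int :: "int \<Rightarrow> triple \<Rightarrow> complex" where
  "hcomp_int k t = (if k < 0 then 0 else hcomp (nat k) t)"

definition hcomp2_int :: "int \<Rightarrow> complex \<Rightarrow> complex \<Rightarrow> complex" where
  "hcomp2_int k y z = (if k < 0 then 0 else (\<Sum>j\<le>nat k. y ^ j * z ^ (nat k - j)))"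

definition hcomp1_int :: "int \<Rightarrow> complex \<Rightarrow> complex" where
  "hcomp1_int k y = (if k < 0 then 0 else y ^ nat k)"

lemma hcomp_0 [simp]: "hcomp 0 t = 1"
  by (cases t) (simp add: hcomp_def)

lemma hcomp_Suc:
  "hcomp (Suc k) (x, y, z) = x * hcomp k (x, y, z) + (\<Sum>j\<le>Suc k. y ^ j * z ^ (Suc k - j))"
proof -
  have "hcomp (Suc k) (x, y, z) = (\<Sum>i\<le>Suc k. \<Sum>j\<le>Suc k - i. x ^ i * y ^ j * z ^ (Suc k - i - j))"
    by (simp add: hcomp_def)
  also have "\<dots> = (\<Sum>j\<le>Suc k. y ^ j * z ^ (Suc k - j))
                  + (\<Sum>i\<le>k. \<Sum>j\<le>k - i. x ^ Suc i * y ^ j * z ^ (k - i - j))"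
    by (subst sum.atMost_Suc_shift) simp
  also have "(\<Sum>i\<le>k. \<Sum>j\<le>k - i. x ^ Suc i * y ^ j * z ^ (k - i - j)) = x * hcomp k (x, y, z)"
    by (simp add: hcomp_def sum_distrib_left mult.assoc)
  finally show ?thesis by simp
qed

text \<open>The recurrence \<open>h_k = e_1 h_(k-1) - e_2 h_(k-2) + e_3 h_(k-3)\<close> is obtained by splitting off
  one variable at a time: \<open>h_k(x,y,z) - x h_(k-1)(x,y,z) = h_k(y,z)\<close> and
  \<open>h_k(y,z) - z h_(k-1)(y,z) = y^k\<close>.\<close>

lemma hcomp_int_split_first:
  "hcomp_int k (x, y, z) - x * hcomp_int (k - 1) (x, y, z) = hcomp2_int k y z"
proof (cases "k \<ge> 1")
  case True
  then have "nat k = Suc (nat (k - 1))" by simp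
  with True show ?thesis by (simp add: hcomp_int_def hcomp2_int_def hcomp_Suc)
qed (cases "k = 0"; auto simp: hcomp_int_def hcomp2_int_def)

lemma hcomp2_int_split_last:
  "hcomp2_int k y z - z * hcomp2_int (k - 1) y z = hcomp1_int k y"
proof (cases "k \<ge> 1")
  case True
  define n where "n = nat (k - 1)"
  have k: "nat k = Suc n" using True by (simp add: n_def)
  have "(\<Sum>j\<le>n. y ^ j * z ^ (Suc n - j)) = z * (\<Sum>j\<le>n. y ^ j * z ^ (n - j))"
    by (simp add: sum_distrib_left Suc_diff_le mult.left_commute)
  with True k show ?thesis by (simp add: hcomp2_int_def hcomp1_int_def n_def)
qed (cases "k = 0"; auto simp: hcomp2_int_def hcomp1_int_def)

lemma hcomp1_int_split:
  "k \<noteq> 0 \<Longrightarrow> hcomp1_int k y - y * hcomp1_int (k - 1) y = 0"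
proof (cases "k \<ge> 1")
  case True
  then have "nat k = Suc (nat (k - 1))" by simp
  with True show ?thesis by (simp add: hcomp1_int_def)
qed (auto simp: hcomp1_int_def)

lemma hcomp_int_recurrence:
  assumes "k \<ge> 1"
  shows "hcomp_int k t = e1 t * hcomp_int (k - 1) t - e2 t * hcomp_int (k - 2) t
                         + e3 t * hcomp_int (k - 3) t"
proof -
  obtain x y z where t: "t = (x, y, z)" by (cases t)
  let ?H = "\<lambda>k. hcomp_int k t" and ?G = "\<lambda>k. hcomp2_int k y z"
  have G: "?G k = ?H k - x * ?H (k - 1)" "?G (k - 1) = ?H (k - 1) - x * ?H (k - 2)"
    "?G (k - 2) = ?H (k - 2) - x * ?H (k - 3)"
    using hcomp_int_split_first[of "k - 1"] hcomp_int_split_first[of "k - 2"]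
      hcomp_int_split_first[of k] by (simp_all add: t algebra_simps)
  have "?H k - e1 t * ?H (k - 1) + e2 t * ?H (k - 2) - e3 t * ?H (k - 3)
        = (?G k - z * ?G (k - 1)) - y * (?G (k - 1) - z * ?G (k - 2))"
    unfolding G by (simp add: t e1_def e2_def e3_def algebra_simps)
  also have "\<dots> = hcomp1_int k y - y * hcomp1_int (k - 1) y"
    using hcomp2_int_split_last[of k] hcomp2_int_split_last[of "k - 1"] by (simp add: algebra_simps)
  also have "\<dots> = 0"
    using assms by (simp add: hcomp1_int_split)
  finally show ?thesis by (simp add: algebra_simps)
qed

definition schur_int :: "int \<Rightarrow> int \<Rightarrow> triple \<Rightarrow> complex" where
  "schur_int a b t = hcomp_int a t * hcomp_int b t - hcomp_int (a + 1) t * hcomp_int (b - 1) t"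

lemma schur2_eq_schur_int: "schur2 a b t = schur_int (int a) (int b) t"
proof (cases "b = 0")
  case False
  then have "nat (int b - 1) = b - 1" by simp
  with False show ?thesis by (simp add: schur2_def schur_int_def hcomp_int_def nat_add_distrib)
qed (simp add: schur2_def schur_int_def hcomp_int_def)

lemma schur_int_vanishing:
  "schur_int a (a + 1) t = 0" "b < 0 \<Longrightarrow> schur_int a b t = 0"
  by (simp_all add: schur_int_def hcomp_int_def)

lemma schur_int_pieri:
  assumes "b \<ge> 0" "a \<ge> -1" "e3 t = 1"
  shows "e1 t * schur_int a b t = schur_int (a + 1) b t + schur_int a (b + 1) t
                                   + schur_int (a - 1) (b - 1) t"
    and "e2 t * schur_int a b t = schur_int (a + 1) (b + 1) t + schur_int a (b - 1) t
                                   + schur_int (a - 1) b t"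
proof -
  have hb: "hcomp_int (b + 1) t = e1 t * hcomp_int b t - e2 t * hcomp_int (b - 1) t + hcomp_int (b - 2) t"
    using hcomp_int_recurrence[of "b + 1" t] assms by simp
  have ha: "hcomp_int (a + 2) t = e1 t * hcomp_int (a + 1) t - e2 t * hcomp_int a t + hcomp_int (a - 1) t"
    using hcomp_int_recurrence[of "a + 2" t] assms by (simp add: add.commute)
  have idx: "a + 1 + 1 = a + 2" "a - 1 + 1 = a" "b - 1 - 1 = b - 2" "b + 1 - 1 = b" by simp_all
  show "e1 t * schur_int a b t = schur_int (a + 1) b t + schur_int a (b + 1) t
                                  + schur_int (a - 1) (b - 1) t"
       "e2 t * schur_int a b t = schur_int (a + 1) (b + 1) t + schur_int a (b - 1) t
                                  + schur_int (a - 1) b t"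
    unfolding schur_int_def idx hb ha by algebra+
qed

lemma e1_mult_schur2:
  assumes "b \<le> a" "e3 t = 1"
  shows "e1 t * schur2 a b t = schur2 (a + 1) b t + (if b < a then schur2 a (b + 1) t else 0)
                               + (if 1 \<le> b then schur2 (a - 1) (b - 1) t else 0)"
proof -
  have "schur_int (int a) (int b + 1) t = (if b < a then schur2 a (b + 1) t else 0)"
    using assms schur_int_vanishing(1)[of "int a" t] by (auto simp: schur2_eq_schur_int add.commute)
  moreover have "schur_int (int a - 1) (int b - 1) t = (if 1 \<le> b then schur2 (a - 1) (b - 1) t else 0)"
    using assms by (auto simp: schur2_eq_schur_int schur_int_vanishing of_nat_diff)
  ultimately show ?thesis
    using schur_int_pieri(1)[of "int b" "int a" t] assms by (simp add: schur2_eq_schur_int add.commute)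
qed

lemma e2_mult_schur2:
  assumes "b \<le> a" "e3 t = 1"
  shows "e2 t * schur2 a b t = schur2 (a + 1) (b + 1) t + (if 1 \<le> b then schur2 a (b - 1) t else 0)
                               + (if b < a then schur2 (a - 1) b t else 0)"
proof -
  have "schur_int (int a) (int b - 1) t = (if 1 \<le> b then schur2 a (b - 1) t else 0)"
    using assms by (auto simp: schur2_eq_schur_int schur_int_vanishing of_nat_diff)
  moreover have "schur_int (int a - 1) (int b) t = (if b < a then schur2 (a - 1) b t else 0)"
    using assms schur_int_vanishing(1)[of "int a - 1" t]
    by (auto simp: schur2_eq_schur_int of_nat_diff)
  ultimately show ?thesis
    using schur_int_pieri(2)[of "int b" "int a" t] assms by (simp add: schur2_eq_schur_int add.commute)
qed

section \<open>Expansion of the test function in Schur polynomials\<close>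

definition schur :: "nat \<times> nat \<Rightarrow> triple \<Rightarrow> complex" where
  "schur l = schur2 (fst l) (snd l)"

definition partitions2 :: "nat \<Rightarrow> (nat \<times> nat) set" where
  "partitions2 m = {(a, b). b \<le> a \<and> a \<le> m}"

lemma finite_partitions2 [simp]: "finite (partitions2 m)"
  by (rule finite_subset[of _ "{..m} \<times> {..m}"]) (auto simp: partitions2_def)

lemma mem_partitions2 [simp]: "l \<in> partitions2 m \<longleftrightarrow> snd l \<le> fst l \<and> fst l \<le> m"
  by (cases l) (simp add: partitions2_def)

definition schur_span :: "nat \<Rightarrow> (triple \<Rightarrow> complex) \<Rightarrow> bool" where
  "schur_span m F \<longleftrightarrow> (\<exists>c. \<forall>t. e3 t = 1 \<longrightarrow> F t = (\<Sum>l\<in>partitions2 m. c l * schur l t))"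

lemma schur_span_cong: "(\<And>t. e3 t = 1 \<Longrightarrow> F t = G t) \<Longrightarrow> schur_span m G \<Longrightarrow> schur_span m F"
  unfolding schur_span_def by metis

lemma schur_span_zero: "schur_span m (\<lambda>t. 0)"
  unfolding schur_span_def by (rule exI[of _ "\<lambda>_. 0"]) simp

lemma schur_span_add: "schur_span m F \<Longrightarrow> schur_span m G \<Longrightarrow> schur_span m (\<lambda>t. F t + G t)"
  unfolding schur_span_def
proof (elim exE)
  fix c d
  assume "\<forall>t. e3 t = 1 \<longrightarrow> F t = (\<Sum>l\<in>partitions2 m. c l * schur l t)"
    and "\<forall>t. e3 t = 1 \<longrightarrow> G t = (\<Sum>l\<in>partitions2 m. d l * schur l t)"
  then show "\<exists>c. \<forall>t. e3 t = 1 \<longrightarrow> F t + G t = (\<Sum>l\<in>partitions2 m. c l * schur l t)"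
    by (intro exI[of _ "\<lambda>l. c l + d l"]) (simp add: distrib_right sum.distrib)
qed

lemma schur_span_cmult: "schur_span m F \<Longrightarrow> schur_span m (\<lambda>t. k * F t)"
  unfolding schur_span_def
proof (elim exE)
  fix c assume "\<forall>t. e3 t = 1 \<longrightarrow> F t = (\<Sum>l\<in>partitions2 m. c l * schur l t)"
  then show "\<exists>c. \<forall>t. e3 t = 1 \<longrightarrow> k * F t = (\<Sum>l\<in>partitions2 m. c l * schur l t)"
    by (intro exI[of _ "\<lambda>l. k * c l"]) (simp add: sum_distrib_left mult.assoc)
qed

lemma schur_span_sum:
  "finite I \<Longrightarrow> (\<And>i. i \<in> I \<Longrightarrow> schur_span m (F i)) \<Longrightarrow> schur_span m (\<lambda>t. \<Sum>i\<in>I. F i t)"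
  by (induction I rule: finite_induct) (simp_all add: schur_span_zero schur_span_add)

lemma schur_span_schur: "l \<in> partitions2 m \<Longrightarrow> schur_span m (schur l)"
  unfolding schur_span_def
proof (intro exI[of _ "\<lambda>l'. if l' = l then 1 else 0"] allI impI)
  fix t assume "l \<in> partitions2 m"
  have "(\<Sum>l'\<in>partitions2 m. (if l' = l then 1 else 0) * schur l' t)
        = (\<Sum>l'\<in>partitions2 m. if l' = l then schur l t else 0)"
    by (rule sum.cong) simp_all
  with \<open>l \<in> partitions2 m\<close>
  show "schur l t = (\<Sum>l'\<in>partitions2 m. (if l' = l then 1 else 0) * schur l' t)"
    by (simp only: sum.delta' finite_partitions2) simp
qed

lemma schur_span_schur2: "b \<le> a \<Longrightarrow> a \<le> m \<Longrightarrow> schur_span m (schur2 a b)"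
  using schur_span_schur[of "(a, b)" m] by (simp add: schur_def)

lemma schur_span_if: "(P \<Longrightarrow> schur_span m F) \<Longrightarrow> schur_span m (\<lambda>t. if P then F t else 0)"
  using schur_span_zero by (cases P) auto

lemma schur_span_mult:
  assumes "\<And>l. l \<in> partitions2 m \<Longrightarrow> schur_span (Suc m) (\<lambda>t. g t * schur l t)"
    and "schur_span m F"
  shows "schur_span (Suc m) (\<lambda>t. g t * F t)"
proof -
  obtain c where c: "\<And>t. e3 t = 1 \<Longrightarrow> F t = (\<Sum>l\<in>partitions2 m. c l * schur l t)"
    using assms(2) unfolding schur_span_def by blast
  show ?thesis
  proof (rule schur_span_cong)
    show "g t * F t = (\<Sum>l\<in>partitions2 m. c l * (g t * schur l t))" if "e3 t = 1" for t
      by (simp add: c[OF that] sum_distrib_left mult.left_commute)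
    show "schur_span (Suc m) (\<lambda>t. \<Sum>l\<in>partitions2 m. c l * (g t * schur l t))"
      by (intro schur_span_sum schur_span_cmult assms(1)) simp_all
  qed
qed

lemma schur_span_e1_mult: "schur_span m F \<Longrightarrow> schur_span (Suc m) (\<lambda>t. e1 t * F t)"
proof (rule schur_span_mult)
  fix l assume "l \<in> partitions2 m"
  then show "schur_span (Suc m) (\<lambda>t. e1 t * schur l t)"
    unfolding schur_def
    by (intro schur_span_cong[OF e1_mult_schur2] schur_span_add schur_span_if schur_span_schur2) auto
qed

lemma schur_span_e2_mult: "schur_span m F \<Longrightarrow> schur_span (Suc m) (\<lambda>t. e2 t * F t)"
proof (rule schur_span_mult)
  fix l assume "l \<in> partitions2 m"
  then show "schur_span (Suc m) (\<lambda>t. e2 t * schur l t)"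
    unfolding schur_def
    by (intro schur_span_cong[OF e2_mult_schur2] schur_span_add schur_span_if schur_span_schur2) auto
qed

lemma schur_span_e1_e2_power: "schur_span (i + k) (\<lambda>t. e1 t ^ i * e2 t ^ k)"
proof (induction i)
  case 0
  show ?case
  proof (induction k)
    case 0
    show ?case
      by (rule schur_span_cong[OF _ schur_span_schur2[of 0 0]]) (simp_all add: schur2_def)
  next
    case (Suc k)
    then show ?case using schur_span_e2_mult by (simp add: mult.left_commute)
  qed
next
  case (Suc i)
  then show ?case using schur_span_e1_mult by (simp add: mult.assoc)
qed

lemma ffun_schur_expansion:
  obtains c c' :: "nat \<times> nat \<Rightarrow> complex"
  where "\<And>t. e3 t = 1 \<Longrightarrow> ffun i1 i1' i2 i2' t =
           (\<Sum>l\<in>partitions2 (i1 + i2). \<Sum>l'\<in>partitions2 (i1' + i2').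
              c l * cnj (c' l') * (schur l t * cnj (schur l' t)))"
proof -
  obtain c where c: "\<And>t. e3 t = 1 \<Longrightarrow> e1 t ^ i1 * e2 t ^ i2 = (\<Sum>l\<in>partitions2 (i1 + i2). c l * schur l t)"
    using schur_span_e1_e2_power[of i1 i2] unfolding schur_span_def by blast
  obtain c' where c': "\<And>t. e3 t = 1 \<Longrightarrow> e1 t ^ i1' * e2 t ^ i2' = (\<Sum>l\<in>partitions2 (i1' + i2'). c' l * schur l t)"
    using schur_span_e1_e2_power[of i1' i2'] unfolding schur_span_def by blast
  show ?thesis
  proof (rule that)
    fix t assume "e3 t = 1"
    have "ffun i1 i1' i2 i2' t = (e1 t ^ i1 * e2 t ^ i2) * cnj (e1 t ^ i1' * e2 t ^ i2')"
      by (cases t) (simp add: ffun_def e1_def e2_def)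
    also have "\<dots> = (\<Sum>l\<in>partitions2 (i1 + i2). \<Sum>l'\<in>partitions2 (i1' + i2').
                       c l * cnj (c' l') * (schur l t * cnj (schur l' t)))"
      by (simp only: c[OF \<open>e3 t = 1\<close>] c'[OF \<open>e3 t = 1\<close>] cnj_sum sum_product) (simp add: mult_ac)
    finally show "ffun i1 i1' i2 i2' t = \<dots>" .
  qed
qed

section \<open>The bialternant formula\<close>

definition perm3 :: "nat \<Rightarrow> 'a \<times> 'a \<times> 'a \<Rightarrow> 'a \<times> 'a \<times> 'a" where
  "perm3 i e = (case e of (p, q, r) \<Rightarrow>
     if i = 0 then (p, q, r) else if i = 1 then (p, r, q) else if i = 2 then (q, p, r)
     else if i = 3 then (q, r, p) else if i = 4 then (r, p, q) else (r, q, p))"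

definition perm3_sign :: "nat \<Rightarrow> complex" where
  "perm3_sign i = (if i = 0 \<or> i = 3 \<or> i = 4 then 1 else -1)"

definition monomial3 :: "nat \<times> nat \<times> nat \<Rightarrow> triple \<Rightarrow> complex" where
  "monomial3 e t = (case e of (p, q, r) \<Rightarrow> case t of (x, y, z) \<Rightarrow> x ^ p * y ^ q * z ^ r)"

definition alternant :: "nat \<times> nat \<times> nat \<Rightarrow> triple \<Rightarrow> complex" where
  "alternant e t = (\<Sum>i<6. perm3_sign i * monomial3 (perm3 i e) t)"

definition vandermonde :: "triple \<Rightarrow> complex" where
  "vandermonde t = (case t of (x, y, z) \<Rightarrow> (x - y) * (x - z) * (y - z))"

lemma alternant_explicit:
  "alternant (p, q, r) (x, y, z) = x^p * y^q * z^r - x^p * y^r * z^q - x^q * y^p * z^r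
                                   + x^q * y^r * z^p + x^r * y^p * z^q - x^r * y^q * z^p"
  by (simp add: alternant_def perm3_def perm3_sign_def monomial3_def numeral_eq_Suc)

lemma e1_mult_alternant:
  "e1 t * alternant (p, q, r) t = alternant (p + 1, q, r) t + alternant (p, q + 1, r) t
                                  + alternant (p, q, r + 1) t"
  by (cases t) (simp add: alternant_explicit e1_def algebra_simps)

lemma e2_mult_alternant:
  "e2 t * alternant (p, q, r) t = alternant (p + 1, q + 1, r) t + alternant (p + 1, q, r + 1) t
                                  + alternant (p, q + 1, r + 1) t"
  by (cases t) (simp add: alternant_explicit e2_def algebra_simps)

lemma alternant_shift: "e3 t = 1 \<Longrightarrow> alternant (p + 1, q + 1, r + 1) t = alternant (p, q, r) t"
proof -
  assume "e3 t = 1"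
  moreover have "alternant (p + 1, q + 1, r + 1) t = e3 t * alternant (p, q, r) t"
    by (cases t) (simp add: alternant_explicit e3_def algebra_simps)
  ultimately show ?thesis by simp
qed

lemma alternant_repeated:
  "alternant (p, p, r) t = 0" "alternant (p, q, q) t = 0"
  by (cases t; simp add: alternant_explicit algebra_simps)+

lemma vandermonde_eq_alternant: "vandermonde t = alternant (2, 1, 0) t"
  by (cases t) (simp add: alternant_explicit vandermonde_def algebra_simps power2_eq_square)

text \<open>The numerator of the Weyl character formula for the weight \<open>(a, b, 0)\<close>, shifted by
  \<open>\<rho> = (2, 1, 0)\<close>.\<close>

definition weyl_numerator :: "nat \<Rightarrow> nat \<Rightarrow> triple \<Rightarrow> complex" where
  "weyl_numerator a b = alternant (a + 2, b + 1, 0)"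

lemma e1_mult_weyl_numerator:
  assumes "b \<le> a" "e3 t = 1"
  shows "e1 t * weyl_numerator a b t = weyl_numerator (a + 1) b t
           + (if b < a then weyl_numerator a (b + 1) t else 0)
           + (if 1 \<le> b then weyl_numerator (a - 1) (b - 1) t else 0)"
proof -
  have "alternant (a + 2, b + 2, 0) t = (if b < a then weyl_numerator a (b + 1) t else 0)"
    using assms alternant_repeated(1)[of "a + 2" 0 t]
    by (auto simp: weyl_numerator_def numeral_eq_Suc)
  moreover have "alternant (a + 2, b + 1, 1) t = (if 1 \<le> b then weyl_numerator (a - 1) (b - 1) t else 0)"
    using assms alternant_shift[of t "a + 1" b 0]
    by (cases b) (auto simp: weyl_numerator_def numeral_eq_Suc alternant_repeated)
  ultimately show ?thesis
    using e1_mult_alternant[of t "a + 2" "b + 1" 0]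
    by (simp add: weyl_numerator_def numeral_eq_Suc)
qed

lemma e2_mult_weyl_numerator:
  assumes "b \<le> a" "e3 t = 1"
  shows "e2 t * weyl_numerator a b t = weyl_numerator (a + 1) (b + 1) t
           + (if 1 \<le> b then weyl_numerator a (b - 1) t else 0)
           + (if b < a then weyl_numerator (a - 1) b t else 0)"
proof -
  have "alternant (a + 3, b + 1, 1) t = (if 1 \<le> b then weyl_numerator a (b - 1) t else 0)"
    using assms alternant_shift[of t "a + 2" b 0]
    by (cases b) (auto simp: weyl_numerator_def numeral_eq_Suc alternant_repeated)
  moreover have "alternant (a + 2, b + 2, 1) t = (if b < a then weyl_numerator (a - 1) b t else 0)"
    using assms alternant_shift[of t "a + 1" "b + 1" 0] alternant_repeated(1)[of "a + 1" 0 t]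
    by (auto simp: weyl_numerator_def numeral_eq_Suc)
  ultimately show ?thesis
    using e2_mult_alternant[of t "a + 2" "b + 1" 0]
    by (simp add: weyl_numerator_def numeral_eq_Suc)
qed

definition pieri_family :: "'a::comm_ring \<Rightarrow> 'a \<Rightarrow> (nat \<Rightarrow> nat \<Rightarrow> 'a) \<Rightarrow> bool" where
  "pieri_family x y F \<longleftrightarrow> (\<forall>a b. b \<le> a \<longrightarrow>
     x * F a b = F (a + 1) b + (if b < a then F a (b + 1) else 0)
                 + (if 1 \<le> b then F (a - 1) (b - 1) else 0) \<and>
     y * F a b = F (a + 1) (b + 1) + (if 1 \<le> b then F a (b - 1) else 0)
                 + (if b < a then F (a - 1) b else 0))"

text \<open>A Pieri family is determined by its value at \<open>(0, 0)\<close>: the \<open>x\<close>-rule at \<open>(a, b)\<close> yields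
  \<open>F (a + 1) b\<close> for \<open>b \<le> a\<close>, and the \<open>y\<close>-rule at \<open>(a, a)\<close> yields \<open>F (a + 1) (a + 1)\<close>.\<close>

lemma pieri_family_eq:
  assumes F: "pieri_family x y F" and G: "pieri_family x y G" and "F 0 0 = G 0 0"
  shows "b \<le> a \<Longrightarrow> F a b = G a b"
proof (induction a arbitrary: b rule: less_induct)
  case (less a)
  consider "a = 0" | a' where "a = Suc a'" "b \<le> a'" | a' where "a = Suc a'" "b = a"
    using less.prems by (cases a) force+
  then show ?case
  proof cases
    case 1
    then show ?thesis using less.prems \<open>F 0 0 = G 0 0\<close> by simp
  next
    case 2
    have rec: "H a b = x * H a' b - (if b < a' then H a' (b + 1) else 0)
                       - (if 1 \<le> b then H (a' - 1) (b - 1) else 0)" if "pieri_family x y H" for H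
      using that 2 unfolding pieri_family_def by (simp add: algebra_simps)
    show ?thesis
      using rec[OF F] rec[OF G] 2 by (simp add: less.IH)
  next
    case 3
    have rec: "H a a = y * H a' a' - (if 1 \<le> a' then H a' (a' - 1) else 0)" if "pieri_family x y H" for H
      using that 3 unfolding pieri_family_def by (simp add: algebra_simps)
    show ?thesis
      using rec[OF F] rec[OF G] 3 by (simp add: less.IH)
  qed
qed

lemma pieri_family_scale:
  assumes "pieri_family x y F"
  shows "pieri_family x y (\<lambda>a b. c * F a b)"
  unfolding pieri_family_def
proof (intro allI impI conjI)
  fix a b :: nat assume "b \<le> a"
  then have "x * F a b = F (a + 1) b + (if b < a then F a (b + 1) else 0)
                         + (if 1 \<le> b then F (a - 1) (b - 1) else 0)"
    and "y * F a b = F (a + 1) (b + 1) + (if 1 \<le> b then F a (b - 1) else 0)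
                     + (if b < a then F (a - 1) b else 0)"
    using assms unfolding pieri_family_def by blast+
  then show "x * (c * F a b) = c * F (a + 1) b + (if b < a then c * F a (b + 1) else 0)
                               + (if 1 \<le> b then c * F (a - 1) (b - 1) else 0)"
    and "y * (c * F a b) = c * F (a + 1) (b + 1) + (if 1 \<le> b then c * F a (b - 1) else 0)
                           + (if b < a then c * F (a - 1) b else 0)"
    by (simp_all add: mult.left_commute[of _ c] distrib_left if_distrib)
qed

lemma pieri_family_schur2: "e3 t = 1 \<Longrightarrow> pieri_family (e1 t) (e2 t) (\<lambda>a b. schur2 a b t)"
  unfolding pieri_family_def using e1_mult_schur2 e2_mult_schur2 by simp

lemma pieri_family_weyl_numerator:
  "e3 t = 1 \<Longrightarrow> pieri_family (e1 t) (e2 t) (\<lambda>a b. weyl_numerator a b t)"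
  unfolding pieri_family_def using e1_mult_weyl_numerator e2_mult_weyl_numerator by simp

theorem vandermonde_mult_schur2:
  assumes "e3 t = 1" "b \<le> a"
  shows "vandermonde t * schur2 a b t = weyl_numerator a b t"
  using pieri_family_eq[OF pieri_family_scale[OF pieri_family_schur2] pieri_family_weyl_numerator] assms
  by (simp add: schur2_def vandermonde_eq_alternant weyl_numerator_def numeral_2_eq_2)

section \<open>Integration over the torus\<close>

lemma interval_integral_cis_int:
  fixes n :: int
  shows "(LBINT t=0..2*pi. cis (of_int n * t)) = (if n = 0 then 2 * pi else 0)"
proof (cases "n = 0")
  case True
  have "(LBINT t=0..2*pi. complex_of_real 1) = of_real (LBINT t=0..2*pi. (1::real))"
    by (rule interval_lebesgue_integral_of_real)
  also have "(LBINT t=0..2*pi. (1::real)) = 2 * pi"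
    using interval_integral_const(2)[of 1 0 "2 * pi"] by (simp add: zero_ereal_def)
  finally show ?thesis using True by simp
next
  case False
  let ?F = "\<lambda>t::real. exp (\<i> * of_int n * of_real t) / (\<i> * of_int n)"
  have "(LBINT t=ereal 0..2*pi. cis (of_int n * t)) = ?F (2 * pi) - ?F 0"
  proof (rule interval_integral_FTC_finite)
    show "continuous_on {min 0 (2 * pi)..max 0 (2 * pi)} (\<lambda>t. cis (real_of_int n * t))"
      by (intro continuous_intros)
    fix x :: real
    have "((\<lambda>z. exp (\<i> * of_int n * z) / (\<i> * of_int n)) has_field_derivative cis (of_int n * x))
            (at (of_real x))"
      using False by (auto intro!: derivative_eq_intros simp: cis_conv_exp field_simps)
    then show "(?F has_vector_derivative cis (of_int n * x)) (at x within {min 0 (2 * pi)..max 0 (2 * pi)})"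
      by (rule has_vector_derivative_real_field)
  qed
  moreover have "exp (\<i> * of_int n * of_real (2 * pi)) = 1"
    using exp_integer_2pi[of "of_int n"] by (simp add: mult.commute mult.left_commute)
  ultimately show ?thesis using False by (simp add: zero_ereal_def)
qed

lemma interval_integrable_cis:
  "interval_lebesgue_integrable lborel 0 (2 * pi) (\<lambda>t. c * cis (a * t + b))"
proof -
  have "continuous_on {0..2*pi} (\<lambda>t. c * cis (a * t + b))"
    unfolding cis_conv_exp by (intro continuous_intros)
  then show ?thesis
    using interval_integrable_continuous_on[of 0 "2 * pi"] by (simp add: zero_ereal_def)
qed

lemma interval_lebesgue_integral_sum:
  fixes f :: "'i \<Rightarrow> real \<Rightarrow> 'b::{banach, second_countable_topology}"
  assumes "finite I" "\<And>i. i \<in> I \<Longrightarrow> interval_lebesgue_integrable lborel a b (f i)"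
  shows "interval_lebesgue_integrable lborel a b (\<lambda>t. \<Sum>i\<in>I. f i t) \<and>
         (LBINT t=a..b. (\<Sum>i\<in>I. f i t)) = (\<Sum>i\<in>I. LBINT t=a..b. f i t)"
  using assms
proof (induction I rule: finite_induct)
  case empty
  then show ?case
    by (simp add: interval_lebesgue_integrable_def set_integrable_def)
next
  case (insert i I)
  then show ?case
    using interval_lebesgue_integral_add[of lborel a b "f i" "\<lambda>t. \<Sum>i\<in>I. f i t"] by simp
qed

lemma double_integral_trig_poly:
  fixes u v :: "'k \<Rightarrow> int" and w :: "'k \<Rightarrow> complex"
  assumes "finite K"
  shows "(LBINT t1=0..2*pi. (LBINT t2=0..2*pi.
            (\<Sum>k\<in>K. w k * cis (of_int (u k) * t1 + of_int (v k) * t2))))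
         = (2 * pi)^2 * (\<Sum>k\<in>K. w k * (if u k = 0 \<and> v k = 0 then 1 else 0))"
proof -
  have inner: "(LBINT t2=0..2*pi. (\<Sum>k\<in>K. w k * cis (of_int (u k) * t1 + of_int (v k) * t2)))
     = (\<Sum>k\<in>K. (w k * (if v k = 0 then 2 * pi else 0)) * cis (of_int (u k) * t1))" for t1
  proof -
    have "(LBINT t2=0..2*pi. (\<Sum>k\<in>K. w k * cis (of_int (u k) * t1 + of_int (v k) * t2)))
          = (\<Sum>k\<in>K. LBINT t2=0..2*pi. (w k * cis (of_int (u k) * t1)) * cis (of_int (v k) * t2))"
    proof -
      have "interval_lebesgue_integrable lborel 0 (2 * pi)
              (\<lambda>t2. w k * cis (of_int (u k) * t1 + of_int (v k) * t2))" for k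
        using interval_integrable_cis[of "w k" "of_int (v k)" "of_int (u k) * t1"]
        by (simp add: add.commute)
      then show ?thesis
        using interval_lebesgue_integral_sum[OF assms, of 0 "2 * pi"
            "\<lambda>k t2. w k * cis (of_int (u k) * t1 + of_int (v k) * t2)"]
        by (simp add: cis_mult[symmetric] mult.assoc)
    qed
    then show ?thesis
      by (simp add: interval_integral_cis_int) (simp add: mult_ac)
  qed
  have "(LBINT t1=0..2*pi. (\<Sum>k\<in>K. (w k * (if v k = 0 then 2 * pi else 0)) * cis (of_int (u k) * t1)))
        = (\<Sum>k\<in>K. (w k * (if v k = 0 then 2 * pi else 0)) * (if u k = 0 then 2 * pi else 0))"
    using interval_lebesgue_integral_sum[OF assms, of 0 "2 * pi"
        "\<lambda>k t1. (w k * (if v k = 0 then 2 * pi else 0)) * cis (of_int (u k) * t1)"]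
      interval_integrable_cis[of "_" "of_int (u _)" 0]
    by (simp add: interval_integral_cis_int)
  then show ?thesis
    by (auto simp: inner sum_distrib_left power2_eq_square intro!: sum.cong)
qed

definition torus :: "real \<Rightarrow> real \<Rightarrow> triple" where
  "torus t1 t2 = (cis t1, cis t2, cis (-(t1 + t2)))"

lemma e3_torus [simp]: "e3 (torus t1 t2) = 1"
  by (simp add: e3_def torus_def cis_mult)

lemma sato_tate_integral_cong:
  "(\<And>t1 t2. F (torus t1 t2) = G (torus t1 t2)) \<Longrightarrow> sato_tate_integral F = sato_tate_integral G"
  unfolding sato_tate_integral_def torus_def by simp

lemma sato_tate_integral_trig_poly:
  assumes "finite K"
    and "\<And>t1 t2. F (torus t1 t2) * of_real ((cmod (vandermonde (torus t1 t2)))^2)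
                 = (\<Sum>k\<in>K. w k * cis (of_int (u k) * t1 + of_int (v k) * t2))"
  shows "sato_tate_integral F = (\<Sum>k\<in>K. w k * (if u k = 0 \<and> v k = 0 then 1 else 0)) / 6"
proof -
  have "sato_tate_integral F = of_real (1 / (6 * (2 * pi)^2)) *
          (LBINT t1=0..2*pi. (LBINT t2=0..2*pi. (\<Sum>k\<in>K. w k * cis (of_int (u k) * t1 + of_int (v k) * t2))))"
    unfolding sato_tate_integral_def assms(2)[unfolded torus_def vandermonde_def prod.case] ..
  then show ?thesis
    by (simp add: double_integral_trig_poly[OF assms(1)])
qed

definition torus_exponent :: "nat \<times> nat \<times> nat \<Rightarrow> int \<times> int" where
  "torus_exponent e = (case e of (p, q, r) \<Rightarrow> (int p - int r, int q - int r))"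

lemma monomial3_torus:
  "monomial3 e (torus t1 t2)
   = cis (of_int (fst (torus_exponent e)) * t1 + of_int (snd (torus_exponent e)) * t2)"
proof -
  obtain p q r where e: "e = (p, q, r)" by (cases e)
  have "monomial3 e (torus t1 t2) = cis (real p * t1) * cis (real q * t2) * cis (real r * (-(t1 + t2)))"
    by (simp add: e monomial3_def torus_def Complex.DeMoivre)
  also have "\<dots> = cis (of_int (fst (torus_exponent e)) * t1 + of_int (snd (torus_exponent e)) * t2)"
    by (simp add: e torus_exponent_def cis_mult algebra_simps)
  finally show ?thesis .
qed

lemma alternant_torus_product:
  "alternant e (torus t1 t2) * cnj (alternant e' (torus t1 t2)) =
   (\<Sum>(i, i')\<in>{..<6} \<times> {..<6}. perm3_sign i * perm3_sign i' *
      cis (of_int (fst (torus_exponent (perm3 i e)) - fst (torus_exponent (perm3 i' e'))) * t1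
         + of_int (snd (torus_exponent (perm3 i e)) - snd (torus_exponent (perm3 i' e'))) * t2))"
proof -
  have sign_real: "cnj (perm3_sign i) = perm3_sign i" for i
    by (simp add: perm3_sign_def)
  have "cis A * cnj (cis B) = cis (A - B)" for A B
    by (simp add: cis_cnj cis_mult)
  then show ?thesis
    by (simp add: alternant_def monomial3_torus cnj_sum sign_real sum_product
        sum.cartesian_product algebra_simps)
qed

section \<open>Schur orthogonality\<close>

definition weyl_exponent :: "nat \<Rightarrow> nat \<times> nat \<Rightarrow> int \<times> int" where
  "weyl_exponent i l = torus_exponent (perm3 i (fst l + 2, snd l + 1, 0))"

lemma weyl_exponent_eq_iff:
  assumes "i < 6" "i' < 6" "snd l \<le> fst l" "snd l' \<le> fst l'"
  shows "weyl_exponent i l = weyl_exponent i' l' \<longleftrightarrow> i = i' \<and> l = l'"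
proof -
  have "i \<in> {0, 1, 2, 3, 4, 5}" "i' \<in> {0, 1, 2, 3, 4, 5}"
    using assms(1,2) by auto
  then show ?thesis
    using assms(3,4) by (auto simp: weyl_exponent_def torus_exponent_def perm3_def prod_eq_iff)
qed

lemma weyl_numerator_constant_term:
  assumes "snd l \<le> fst l" "snd l' \<le> fst l'"
  shows "(\<Sum>(i, i')\<in>{..<6} \<times> {..<6}. perm3_sign i * perm3_sign i' *
            (if weyl_exponent i l = weyl_exponent i' l' then 1 else 0))
         = 6 * (if l = l' then 1 else 0)"
proof -
  have "(\<Sum>(i, i')\<in>{..<6} \<times> {..<6}. perm3_sign i * perm3_sign i' *
            (if weyl_exponent i l = weyl_exponent i' l' then 1 else 0))
        = (\<Sum>(i, i')\<in>{..<6} \<times> {..<6}. perm3_sign i * perm3_sign i' * (if i = i' \<and> l = l' then 1 else 0))"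
    by (rule sum.cong) (auto simp: weyl_exponent_eq_iff[OF _ _ assms])
  also have "\<dots> = 6 * (if l = l' then 1 else 0)"
    by (simp add: sum.cartesian_product[symmetric] perm3_sign_def numeral_eq_Suc)
  finally show ?thesis .
qed

lemma schur_product_torus:
  assumes "snd l \<le> fst l" "snd l' \<le> fst l'"
  shows "schur l (torus t1 t2) * cnj (schur l' (torus t1 t2)) * of_real ((cmod (vandermonde (torus t1 t2)))^2) =
         (\<Sum>(i, i')\<in>{..<6} \<times> {..<6}. perm3_sign i * perm3_sign i' *
            cis (of_int (fst (weyl_exponent i l) - fst (weyl_exponent i' l')) * t1
               + of_int (snd (weyl_exponent i l) - snd (weyl_exponent i' l')) * t2))"
proof -
  let ?t = "torus t1 t2" and ?V = "vandermonde (torus t1 t2)"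
  have "schur l ?t * cnj (schur l' ?t) * of_real ((cmod ?V)^2) = (?V * schur l ?t) * cnj (?V * schur l' ?t)"
    unfolding complex_norm_square by (simp add: mult_ac)
  also have "\<dots> = weyl_numerator (fst l) (snd l) ?t * cnj (weyl_numerator (fst l') (snd l') ?t)"
    using assms by (simp add: schur_def vandermonde_mult_schur2)
  also have "\<dots> = (\<Sum>(i, i')\<in>{..<6} \<times> {..<6}. perm3_sign i * perm3_sign i' *
                     cis (of_int (fst (weyl_exponent i l) - fst (weyl_exponent i' l')) * t1
                        + of_int (snd (weyl_exponent i l) - snd (weyl_exponent i' l')) * t2))"
    unfolding weyl_numerator_def weyl_exponent_def by (rule alternant_torus_product)
  finally show ?thesis .
qed

theorem sato_tate_integral_schur_orthogonality:
  assumes "finite L" "finite L'" "\<And>l. l \<in> L \<union> L' \<Longrightarrow> snd l \<le> fst l"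
  shows "sato_tate_integral (\<lambda>x. \<Sum>l\<in>L. \<Sum>l'\<in>L'. c l l' * (schur l x * cnj (schur l' x)))
         = (\<Sum>l\<in>L. \<Sum>l'\<in>L'. c l l' * (if l = l' then 1 else 0))"
proof -
  define K where "K = L \<times> L' \<times> ({..<6::nat} \<times> {..<6::nat})"
  define w where "w = (\<lambda>(l, l', i, i'). c l l' * (perm3_sign i * perm3_sign i'))"
  define u where "u = (\<lambda>(l, l', i, i'). fst (weyl_exponent i l) - fst (weyl_exponent i' l'))"
  define v where "v = (\<lambda>(l, l', i, i'). snd (weyl_exponent i l) - snd (weyl_exponent i' l'))"
  have integrand:
    "(\<Sum>l\<in>L. \<Sum>l'\<in>L'. c l l' * (schur l (torus t1 t2) * cnj (schur l' (torus t1 t2))))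
       * of_real ((cmod (vandermonde (torus t1 t2)))^2)
     = (\<Sum>k\<in>K. w k * cis (of_int (u k) * t1 + of_int (v k) * t2))" for t1 t2
  proof -
    have "(\<Sum>l\<in>L. \<Sum>l'\<in>L'. c l l' * (schur l (torus t1 t2) * cnj (schur l' (torus t1 t2))))
            * of_real ((cmod (vandermonde (torus t1 t2)))^2)
          = (\<Sum>l\<in>L. \<Sum>l'\<in>L'. c l l' * (schur l (torus t1 t2) * cnj (schur l' (torus t1 t2))
                                          * of_real ((cmod (vandermonde (torus t1 t2)))^2)))"
      by (simp add: sum_distrib_right mult.assoc)
    also have "\<dots> = (\<Sum>l\<in>L. \<Sum>l'\<in>L'. c l l' * (\<Sum>(i, i')\<in>{..<6} \<times> {..<6}. perm3_sign i * perm3_sign i' *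
                     cis (of_int (fst (weyl_exponent i l) - fst (weyl_exponent i' l')) * t1
                        + of_int (snd (weyl_exponent i l) - snd (weyl_exponent i' l')) * t2)))"
      by (intro sum.cong refl arg_cong2[where f = "(*)"] schur_product_torus) (use assms(3) in auto)
    also have "\<dots> = (\<Sum>k\<in>K. w k * cis (of_int (u k) * t1 + of_int (v k) * t2))"
      by (simp add: sum_distrib_left K_def sum.cartesian_product)
        (auto simp: w_def u_def v_def intro!: sum.cong)
    finally show ?thesis .
  qed
  have "sato_tate_integral (\<lambda>x. \<Sum>l\<in>L. \<Sum>l'\<in>L'. c l l' * (schur l x * cnj (schur l' x)))
        = (\<Sum>k\<in>K. w k * (if u k = 0 \<and> v k = 0 then 1 else 0)) / 6"
    by (rule sato_tate_integral_trig_poly) (use integrand in \<open>simp_all add: K_def assms\<close>)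
  also have "(\<Sum>k\<in>K. w k * (if u k = 0 \<and> v k = 0 then 1 else 0))
             = (\<Sum>l\<in>L. \<Sum>l'\<in>L'. c l l' * (\<Sum>(i, i')\<in>{..<6} \<times> {..<6}. perm3_sign i * perm3_sign i' *
                  (if weyl_exponent i l = weyl_exponent i' l' then 1 else 0)))"
    by (simp add: K_def sum.cartesian_product sum_distrib_left prod_eq_iff)
      (auto simp: w_def u_def v_def intro!: sum.cong)
  also have "\<dots> = (\<Sum>l\<in>L. \<Sum>l'\<in>L'. c l l' * (6 * (if l = l' then 1 else 0)))"
    using assms(3) by (intro sum.cong refl) (simp add: weyl_numerator_constant_term)
  finally show ?thesis
    by (simp add: sum_divide_distrib)
qed

lemma sato_tate_integral_schur_expansion:
  assumes "\<And>t. e3 t = 1 \<Longrightarrow>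
             F t = (\<Sum>l\<in>partitions2 N1. \<Sum>l'\<in>partitions2 N2. k l l' * (schur l t * cnj (schur l' t)))"
  shows "sato_tate_integral F = (\<Sum>l\<in>partitions2 N1. \<Sum>l'\<in>partitions2 N2. k l l' * (if l = l' then 1 else 0))"
proof -
  have "sato_tate_integral F = sato_tate_integral
          (\<lambda>t. \<Sum>l\<in>partitions2 N1. \<Sum>l'\<in>partitions2 N2. k l l' * (schur l t * cnj (schur l' t)))"
    using assms by (intro sato_tate_integral_cong) simp
  also have "\<dots> = (\<Sum>l\<in>partitions2 N1. \<Sum>l'\<in>partitions2 N2. k l l' * (if l = l' then 1 else 0))"
    by (rule sato_tate_integral_schur_orthogonality) auto
  finally show ?thesis .
qed

section \<open>Averaging against the orthogonality estimate\<close>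

lemma has_sum_sum:
  fixes g :: "'i \<Rightarrow> 'a \<Rightarrow> 'b::topological_comm_monoid_add"
  assumes "finite I" "\<And>i. i \<in> I \<Longrightarrow> (g i has_sum s i) A"
  shows "((\<lambda>x. \<Sum>i\<in>I. g i x) has_sum (\<Sum>i\<in>I. s i)) A"
  using assms by (induction I rule: finite_induct) (simp_all add: has_sum_add)

lemma normalized_sum_error:
  fixes a :: "'z \<Rightarrow> 'j \<Rightarrow> complex" and k \<delta> :: "'z \<Rightarrow> complex" and \<omega> :: "'j \<Rightarrow> real"
  assumes "finite Z" "W > 0"
    and summable: "\<And>z. z \<in> Z \<Longrightarrow> (\<lambda>j. a z j * of_real (\<omega> j)) summable_on UNIV"
    and error: "\<And>z. z \<in> Z \<Longrightarrow> cmod ((\<Sum>\<^sub>\<infinity>j. a z j * of_real (\<omega> j)) - \<delta> z * of_real W) \<le> E"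
  shows "cmod ((\<Sum>\<^sub>\<infinity>j. (\<Sum>z\<in>Z. k z * a z j) * of_real (\<omega> j)) / of_real W - (\<Sum>z\<in>Z. k z * \<delta> z))
         \<le> (\<Sum>z\<in>Z. cmod (k z)) * E / W"
proof -
  define X where "X z = (\<Sum>\<^sub>\<infinity>j. a z j * of_real (\<omega> j))" for z
  have "((\<lambda>j. \<Sum>z\<in>Z. k z * (a z j * of_real (\<omega> j))) has_sum (\<Sum>z\<in>Z. k z * X z)) UNIV"
    using summable unfolding X_def by (intro has_sum_sum assms(1) has_sum_cmult_right) simp
  then have "(\<Sum>\<^sub>\<infinity>j. (\<Sum>z\<in>Z. k z * a z j) * of_real (\<omega> j)) = (\<Sum>z\<in>Z. k z * X z)"
    by (simp add: infsumI sum_distrib_right mult.assoc)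
  moreover have "(\<Sum>z\<in>Z. k z * (X z - \<delta> z * of_real W))
                 = (\<Sum>z\<in>Z. k z * X z) - (\<Sum>z\<in>Z. k z * \<delta> z) * of_real W"
    by (simp add: sum_subtractf sum_distrib_right right_diff_distrib mult.assoc)
  ultimately have "(\<Sum>\<^sub>\<infinity>j. (\<Sum>z\<in>Z. k z * a z j) * of_real (\<omega> j)) / of_real W - (\<Sum>z\<in>Z. k z * \<delta> z)
                   = (\<Sum>z\<in>Z. k z * (X z - \<delta> z * of_real W)) / of_real W"
    using \<open>W > 0\<close> by (simp add: diff_divide_distrib)
  also have "cmod \<dots> \<le> (\<Sum>z\<in>Z. cmod (k z) * E) / W"
    using \<open>W > 0\<close> error unfolding X_def norm_divide
    by (auto intro!: divide_right_mono order.trans[OF norm_sum] sum_mono mult_left_mono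
        simp: norm_mult)
  finally show ?thesis
    by (simp add: sum_distrib_right)
qed

definition orthogonality_bound ::
    "(nat \<Rightarrow> nat \<Rightarrow> nat \<Rightarrow> complex) \<Rightarrow> (nat \<Rightarrow> real) \<Rightarrow> real \<Rightarrow> real \<Rightarrow> real \<Rightarrow> real \<Rightarrow> bool" where
  "orthogonality_bound A w \<theta> \<epsilon> C T \<longleftrightarrow> (\<forall>m1 m2 n1 n2.
     m1 \<ge> 1 \<longrightarrow> m2 \<ge> 1 \<longrightarrow> n1 \<ge> 1 \<longrightarrow> n2 \<ge> 1 \<longrightarrow>
     (let Q = real (m1 * m2 * n1 * n2) in
      (\<lambda>j. A j m1 m2 * cnj (A j n1 n2) * of_real (w j)) summable_on UNIV \<and>
      cmod ((\<Sum>\<^sub>\<infinity>j. A j m1 m2 * cnj (A j n1 n2) * of_real (w j))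
            - (if m1 = n1 \<and> m2 = n2 then 1 else 0) * of_real (\<Sum>\<^sub>\<infinity>j. w j))
      \<le> C * (T^2 * Q powr (1/2) + T^3 * Q powr \<theta> + Q powr (5/3)) * (T * Q) powr \<epsilon>))"

lemma orthogonality_bound_const_nonneg:
  assumes "orthogonality_bound A w \<theta> \<epsilon> C T" "T > 0"
  shows "C \<ge> 0"
proof -
  have "cmod ((\<Sum>\<^sub>\<infinity>j. A j 1 1 * cnj (A j 1 1) * of_real (w j)) - of_real (\<Sum>\<^sub>\<infinity>j. w j))
        \<le> C * (T^2 + T^3 + 1) * T powr \<epsilon>"
    using assms(1)[unfolded orthogonality_bound_def Let_def, rule_format, of 1 1 1 1] by simp
  then have "0 \<le> C * (T^2 + T^3 + 1) * T powr \<epsilon>"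
    by (rule order.trans[OF norm_ge_zero])
  moreover have "0 < (T^2 + T^3 + 1) * T powr \<epsilon>"
    using assms(2) by (intro mult_pos_pos add_pos_pos) auto
  ultimately show ?thesis
    by (simp add: zero_le_mult_iff mult.assoc)
qed

lemma error_term_mono:
  fixes Q P T \<theta> \<epsilon> :: real
  assumes "1 \<le> Q" "Q \<le> P" "0 < T" "0 \<le> \<theta>" "0 \<le> \<epsilon>"
  shows "(T^2 * Q powr (1/2) + T^3 * Q powr \<theta> + Q powr (5/3)) * (T * Q) powr \<epsilon>
         \<le> (T^2 * P powr (1/2) + T^3 * P powr \<theta> + P powr (5/3)) * T powr \<epsilon> * P powr \<epsilon>"
proof -
  have "Q powr x \<le> P powr x" if "0 \<le> x" for x
    using assms that by (intro powr_mono2) auto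
  then have "T^2 * Q powr (1/2) + T^3 * Q powr \<theta> + Q powr (5/3)
             \<le> T^2 * P powr (1/2) + T^3 * P powr \<theta> + P powr (5/3)"
    and "(T * Q) powr \<epsilon> \<le> T powr \<epsilon> * P powr \<epsilon>"
    using assms by (auto intro!: add_mono mult_left_mono simp: powr_mult)
  moreover have "0 \<le> T^2 * P powr (1/2) + T^3 * P powr \<theta> + P powr (5/3)"
    using assms by simp
  ultimately show ?thesis
    by (simp add: mult.assoc mult_mono)
qed

lemma divide_by_weyl_law:
  fixes x c T W \<epsilon> :: real
  assumes "0 \<le> x" "0 < c" "0 < T" "c * T^5 \<le> W"
  shows "x * T powr \<epsilon> / W \<le> x / c * T powr (-5 + \<epsilon>)"
proof -
  have "0 < c * T^5"
    using assms by simp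
  moreover from this have "0 < W"
    using assms(4) by linarith
  ultimately have "x * T powr \<epsilon> / W \<le> x * T powr \<epsilon> / (c * T^5)"
    using assms by (intro divide_left_mono mult_pos_pos) simp_all
  also have "\<dots> = x / c * (T powr \<epsilon> / T powr 5)"
    using assms by (simp add: powr_realpow)
  also have "\<dots> = x / c * T powr (-5 + \<epsilon>)"
    using assms by (simp add: powr_diff)
  finally show ?thesis .
qed

lemma orthogonality_bound_prime_powers:
  fixes A :: "nat \<Rightarrow> nat \<Rightarrow> nat \<Rightarrow> complex" and w :: "nat \<Rightarrow> real"
  assumes E: "orthogonality_bound A w \<theta> \<epsilon> C T"
    and "p > 1" "0 < T" "0 \<le> \<theta>" "0 \<le> \<epsilon>"
    and l: "snd l \<le> fst l" and l': "snd l' \<le> fst l'" and "fst l + fst l' \<le> N"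
    and P_def: "P = real p ^ N"
  defines "a \<equiv> \<lambda>j. A j (p ^ (fst l - snd l)) (p ^ snd l) * cnj (A j (p ^ (fst l' - snd l')) (p ^ snd l'))"
  shows "(\<lambda>j. a j * of_real (w j)) summable_on UNIV"
    and "cmod ((\<Sum>\<^sub>\<infinity>j. a j * of_real (w j)) - (if l = l' then 1 else 0) * of_real (\<Sum>\<^sub>\<infinity>j. w j))
         \<le> C * (T^2 * P powr (1/2) + T^3 * P powr \<theta> + P powr (5/3)) * T powr \<epsilon> * P powr \<epsilon>"
proof -
  define Q where "Q = real (p ^ (fst l - snd l) * p ^ snd l * p ^ (fst l' - snd l') * p ^ snd l')"
  have E': "(\<lambda>j. a j * of_real (w j)) summable_on UNIV \<and>
      cmod ((\<Sum>\<^sub>\<infinity>j. a j * of_real (w j))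
            - (if p ^ (fst l - snd l) = p ^ (fst l' - snd l') \<and> p ^ snd l = p ^ snd l' then 1 else 0)
              * of_real (\<Sum>\<^sub>\<infinity>j. w j))
      \<le> C * (T^2 * Q powr (1/2) + T^3 * Q powr \<theta> + Q powr (5/3)) * (T * Q) powr \<epsilon>"
  proof -
    have "p ^ i \<ge> 1" for i
      using \<open>p > 1\<close> by simp
    then show ?thesis
      using E unfolding orthogonality_bound_def Let_def Q_def a_def by blast
  qed
  then show "(\<lambda>j. a j * of_real (w j)) summable_on UNIV"
    by blast
  have "Q = real p ^ (fst l + fst l')"
    using l l' by (simp add: Q_def power_add[symmetric] mult.assoc)
  then have "1 \<le> Q" "Q \<le> P"
    using assms by (auto simp: P_def intro!: power_increasing)
  then have "(T^2 * Q powr (1/2) + T^3 * Q powr \<theta> + Q powr (5/3)) * (T * Q) powr \<epsilon>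
             \<le> (T^2 * P powr (1/2) + T^3 * P powr \<theta> + P powr (5/3)) * T powr \<epsilon> * P powr \<epsilon>"
    using assms by (intro error_term_mono) auto
  from mult_left_mono[OF this orthogonality_bound_const_nonneg[OF E \<open>0 < T\<close>]]
  have "C * (T^2 * Q powr (1/2) + T^3 * Q powr \<theta> + Q powr (5/3)) * (T * Q) powr \<epsilon>
        \<le> C * (T^2 * P powr (1/2) + T^3 * P powr \<theta> + P powr (5/3)) * T powr \<epsilon> * P powr \<epsilon>"
    by (simp only: mult.assoc)
  moreover have "p ^ (fst l - snd l) = p ^ (fst l' - snd l') \<and> p ^ snd l = p ^ snd l' \<longleftrightarrow> l = l'"
    using \<open>p > 1\<close> l l' by (auto simp: prod_eq_iff power_inject_exp)
  ultimately show "cmod ((\<Sum>\<^sub>\<infinity>j. a j * of_real (w j)) - (if l = l' then 1 else 0) * of_real (\<Sum>\<^sub>\<infinity>j. w j))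
      \<le> C * (T^2 * P powr (1/2) + T^3 * P powr \<theta> + P powr (5/3)) * T powr \<epsilon> * P powr \<epsilon>"
    using E' by simp
qed

lemma schur_average_error:
  fixes A :: "nat \<Rightarrow> nat \<Rightarrow> nat \<Rightarrow> complex" and \<alpha> :: "nat \<Rightarrow> triple" and w :: "nat \<Rightarrow> real"
    and k :: "nat \<times> nat \<Rightarrow> nat \<times> nat \<Rightarrow> complex"
  assumes "prime p"
    and e3_\<alpha>: "\<And>j. e3 (\<alpha> j) = 1"
    and A_schur: "\<And>j a b. A j (p ^ a) (p ^ b) = schur2 (a + b) b (\<alpha> j)"
    and expansion: "\<And>t. e3 t = 1 \<Longrightarrow>
          F t = (\<Sum>l\<in>partitions2 N1. \<Sum>l'\<in>partitions2 N2. k l l' * (schur l t * cnj (schur l' t)))"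
    and E: "orthogonality_bound A w \<theta> \<epsilon> C T"
    and weyl: "c * T^5 \<le> (\<Sum>\<^sub>\<infinity>j. w j)"
    and "0 < c" "0 < T" "0 \<le> \<theta>" "0 \<le> \<epsilon>"
    and P_def: "P = real p ^ (N1 + N2)"
  shows "cmod ((\<Sum>\<^sub>\<infinity>j. F (\<alpha> j) * of_real (w j)) / of_real (\<Sum>\<^sub>\<infinity>j. w j) - sato_tate_integral F)
         \<le> (\<Sum>l\<in>partitions2 N1. \<Sum>l'\<in>partitions2 N2. cmod (k l l')) * C / c
            * (T^2 * P powr (1/2) + T^3 * P powr \<theta> + P powr (5/3)) * T powr (-5 + \<epsilon>) * P powr \<epsilon>"
proof -
  define Z where "Z = partitions2 N1 \<times> partitions2 N2"
  define a where "a z j = A j (p ^ (fst (fst z) - snd (fst z))) (p ^ snd (fst z))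
                          * cnj (A j (p ^ (fst (snd z) - snd (snd z))) (p ^ snd (snd z)))" for z j
  define B where "B = T^2 * P powr (1/2) + T^3 * P powr \<theta> + P powr (5/3)"
  define S where "S = (\<Sum>z\<in>Z. cmod (k (fst z) (snd z)))"
  have "p > 1"
    using \<open>prime p\<close> prime_gt_1_nat by blast
  have schur_A: "schur l (\<alpha> j) = A j (p ^ (fst l - snd l)) (p ^ snd l)" if "snd l \<le> fst l" for l j
    using A_schur[of j "fst l - snd l" "snd l"] that by (simp add: schur_def)
  have F_\<alpha>: "F (\<alpha> j) = (\<Sum>z\<in>Z. k (fst z) (snd z) * a z j)" for j
    unfolding expansion[OF e3_\<alpha>] Z_def sum.cartesian_product a_def
    by (intro sum.cong refl) (auto simp: schur_A)
  have "0 < c * T^5"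
    using assms by simp
  then have "0 < (\<Sum>\<^sub>\<infinity>j. w j)"
    using weyl by linarith
  moreover have "(\<lambda>j. a z j * of_real (w j)) summable_on UNIV"
    and "cmod ((\<Sum>\<^sub>\<infinity>j. a z j * of_real (w j)) - (if fst z = snd z then 1 else 0) * of_real (\<Sum>\<^sub>\<infinity>j. w j))
         \<le> C * B * T powr \<epsilon> * P powr \<epsilon>" if "z \<in> Z" for z
    using orthogonality_bound_prime_powers[OF E \<open>p > 1\<close> \<open>0 < T\<close> \<open>0 \<le> \<theta>\<close> \<open>0 \<le> \<epsilon>\<close>,
        of "fst z" "snd z" "N1 + N2" P] that P_def
    by (auto simp: Z_def a_def B_def)
  ultimately have "cmod ((\<Sum>\<^sub>\<infinity>j. (\<Sum>z\<in>Z. k (fst z) (snd z) * a z j) * of_real (w j)) / of_real (\<Sum>\<^sub>\<infinity>j. w j)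
                   - (\<Sum>z\<in>Z. k (fst z) (snd z) * (if fst z = snd z then 1 else 0)))
             \<le> S * (C * B * T powr \<epsilon> * P powr \<epsilon>) / (\<Sum>\<^sub>\<infinity>j. w j)"
    unfolding S_def by (intro normalized_sum_error) (simp_all add: Z_def)
  also have "\<dots> \<le> S * C / c * B * T powr (-5 + \<epsilon>) * P powr \<epsilon>"
  proof -
    have "0 \<le> S * C * B * P powr \<epsilon>"
      using orthogonality_bound_const_nonneg[OF E \<open>0 < T\<close>] \<open>0 < T\<close>
      by (simp add: S_def B_def sum_nonneg)
    from divide_by_weyl_law[OF this \<open>0 < c\<close> \<open>0 < T\<close> weyl, of \<epsilon>] show ?thesis
      by (simp add: mult_ac)
  qed
  finally show ?thesis
    by (simp add: sato_tate_integral_schur_expansion[OF expansion] F_\<alpha> S_def Z_def B_def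
        sum.cartesian_product case_prod_beta)
qed

theorem theorem9p1:
  fixes A :: "nat \<Rightarrow> nat \<Rightarrow> nat \<Rightarrow> complex"
    and nu1 nu2 :: "nat \<Rightarrow> complex"
    and L :: "nat \<Rightarrow> real"
    and h :: "real \<Rightarrow> complex \<Rightarrow> complex \<Rightarrow> real"
    and \<omega> :: "nat \<Rightarrow> real \<Rightarrow> real"
    and alpha :: "nat \<Rightarrow> nat \<Rightarrow> complex \<times> complex \<times> complex"
    and \<theta> :: real
    and i1 i1' i2 i2' :: nat
  assumes L_pos: "\<And>j. L j > 0"
    and satake_det: "\<And>p j. prime p \<Longrightarrow>
          (case alpha p j of (a1, a2, a3) \<Rightarrow> a1 * a2 * a3 = 1)"
    and casselman_shalika: "\<And>p j a b. prime p \<Longrightarrow>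
          A j (p ^ a) (p ^ b) = schur2 (a + b) b (alpha p j)"
    and h_nonneg: "\<And>T v1 v2. h T v1 v2 \<ge> 0"
    and h_bounded: "\<exists>B T0. \<forall>T\<ge>T0. \<forall>v1 v2. \<bar>Re v1\<bar> \<le> 1/2 \<and> \<bar>Re v2\<bar> \<le> 1/2
          \<longrightarrow> h T v1 v2 \<le> B"
    and h_asymp_one: "\<exists>c c1 c2 T0. c > 0 \<and> c1 > 0 \<and> c2 > 0 \<and>
          (\<forall>T\<ge>T0. \<forall>v1 v2. c \<le> Im v1 \<and> Im v1 \<le> T \<and> c \<le> Im v2 \<and> Im v2 \<le> T
             \<and> \<bar>Re v1\<bar> \<le> 1/2 \<and> \<bar>Re v2\<bar> \<le> 1/2 \<longrightarrow> c1 \<le> h T v1 v2 \<and> h T v1 v2 \<le> c2)"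
    and h_decay: "\<And>A'. \<exists>C T0. \<forall>T\<ge>T0. \<forall>v1 v2.
          h T v1 v2 \<le> C * ((1 + cmod v1 / T) * (1 + cmod v2 / T)) powr (- A')"
    and \<omega>_def: "\<And>j T. \<omega> j T = h T (nu1 j) (nu2 j) / L j"
    and theta_nonneg: "0 \<le> \<theta>"
    and orthogonality_E: "\<And>\<epsilon>. \<epsilon> > 0 \<Longrightarrow> \<exists>C T0. \<forall>T\<ge>T0. \<forall>m1 m2 n1 n2.
          m1 \<ge> 1 \<longrightarrow> m2 \<ge> 1 \<longrightarrow> n1 \<ge> 1 \<longrightarrow> n2 \<ge> 1 \<longrightarrow>
          (let Q = real (m1 * m2 * n1 * n2) in
           (\<lambda>j. A j m1 m2 * cnj (A j n1 n2) * of_real (\<omega> j T)) summable_on UNIV \<and>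
           cmod ((\<Sum>\<^sub>\<infinity>j. A j m1 m2 * cnj (A j n1 n2) * of_real (\<omega> j T))
                 - (if m1 = n1 \<and> m2 = n2 then 1 else 0) * of_real (\<Sum>\<^sub>\<infinity>j. \<omega> j T))
           \<le> C * (T^2 * Q powr (1/2) + T^3 * Q powr \<theta> + Q powr (5/3)) * (T * Q) powr \<epsilon>)"
    and weyl_law: "\<exists>c1 c2 T0. c1 > 0 \<and> c2 > 0 \<and> (\<forall>T\<ge>T0.
          (\<lambda>j. \<omega> j T) summable_on UNIV \<and>
          c1 * T^5 \<le> (\<Sum>\<^sub>\<infinity>j. \<omega> j T) \<and> (\<Sum>\<^sub>\<infinity>j. \<omega> j T) \<le> c2 * T^5)"
  shows "\<forall>\<epsilon>>0. \<exists>C T0. \<forall>p T. prime p \<longrightarrow> T \<ge> T0 \<longrightarrow>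
          (let P = real p ^ (i1 + i1' + i2 + i2') in
           cmod ((\<Sum>\<^sub>\<infinity>j. ffun i1 i1' i2 i2' (alpha p j) * of_real (\<omega> j T))
                   / of_real (\<Sum>\<^sub>\<infinity>j. \<omega> j T)
                 - sato_tate_integral (ffun i1 i1' i2 i2'))
           \<le> C * (T^2 * P powr (1/2) + T^3 * P powr \<theta> + P powr (5/3))
               * T powr (-5 + \<epsilon>) * P powr \<epsilon>)"
proof (intro allI impI, goal_cases)
  case (1 \<epsilon>)
  obtain c c' where expansion: "\<And>t. e3 t = 1 \<Longrightarrow> ffun i1 i1' i2 i2' t =
      (\<Sum>l\<in>partitions2 (i1 + i2). \<Sum>l'\<in>partitions2 (i1' + i2'). c l * cnj (c' l') * (schur l t * cnj (schur l' t)))"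
    using ffun_schur_expansion[of i1 i1' i2 i2'] by blast
  define S where "S = (\<Sum>l\<in>partitions2 (i1 + i2). \<Sum>l'\<in>partitions2 (i1' + i2'). cmod (c l * cnj (c' l')))"
  obtain C TE where E: "\<And>T. T \<ge> TE \<Longrightarrow> orthogonality_bound A (\<lambda>j. \<omega> j T) \<theta> \<epsilon> C T"
    using orthogonality_E[OF \<open>\<epsilon> > 0\<close>] unfolding orthogonality_bound_def by blast
  obtain c1 TW where "c1 > 0" and weyl: "\<And>T. T \<ge> TW \<Longrightarrow> c1 * T^5 \<le> (\<Sum>\<^sub>\<infinity>j. \<omega> j T)"
    using weyl_law by blast
  show ?case
  proof (rule exI[of _ "S * C / c1"], rule exI[of _ "max (max TE TW) 1"], intro allI impI, goal_cases)
    case (1 p T)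
    have "e3 (alpha p j) = 1" for j
      using satake_det[OF \<open>prime p\<close>, of j] by (simp add: e3_def split: prod.splits)
    with 1 show ?case
      unfolding Let_def S_def
      by (intro schur_average_error[OF \<open>prime p\<close> _ casselman_shalika expansion E weyl \<open>c1 > 0\<close>])
         (use \<open>\<epsilon> > 0\<close> theta_nonneg in \<open>auto simp: add_ac\<close>)
  qed
qed

end
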